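(* Let $\mathbf{X}\subseteq\mathbb{R}_+^n$ be an interval and $\mathrm{IC}(\mathbf{a}_0,\dots,\mathbf{a}_{n-1})$ an interval circulant matrix. Then $\mathrm{IC}(\mathbf{a}_0,\dots,\mathbf{a}_{n-1})$ is universally $\mathbf{X}$-robust, i.e. $x\in\mathrm{Attr}(A)$ for all $A\in\mathrm{IC}(\mathbf{a}_0,\dots,\mathbf{a}_{n-1})$ and all $x\in\mathbf{X}$, if and only if $x^{(j)}\in\mathrm{Attr}(A^{(i)})$ for all $i\in\{0,\dots,n-1\}$ and $j\in\{1,\dots,n\}$.
   Context: Max algebra on $\mathbb{R}_+$: $\oplus=\max$, ordinary product; $\lambda(A)$ greatest max-algebraic eigenvalue (maximum cycle geometric mean); $\mathrm{Attr}(A)=\{x\in\mathbb{R}_+^n: A^{t+1}\otimes x=\lambda(A)A^t\otimes x\text{ for some }t\ge0\}$. An interval $\mathbf{X}=\prod_i\mathbf{X}_i$ has each $\mathbf{X}_i\subseteq\mathbb{R}_+$ nonempty of one of the forms $[\underline{x}_i,\overline{x}_i]$, $(\underline{x}_i,\overline{x}_i)$, $(\underline{x}_i,\overline{x}_i]$, $[\underline{x}_i,\overline{x}_i)$; $x^{(k)}=(\underline{x}_1,\dots,\underline{x}_{k-1},\overline{x}_k,\underline{x}_{k+1},\dots,\underline{x}_n)$. $\mathrm{Circ}(a_0,\dots,a_{n-1})$ has entries $A_{i,j}=a_t$, $t\equiv j-i\pmod n$; $\mathrm{IC}(\mathbf{a}_0,\dots,\mathbf{a}_{n-1})$ is the set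 of all $\mathrm{Circ}(a_0,\dots,a_{n-1})$ with $a_t\in\mathbf{a}_t$, each $\mathbf{a}_t\subseteq\mathbb{R}_+$ a nonempty interval of one of the four forms with endpoints $\underline a_t\le\overline a_t$. $A^{(k)}=\mathrm{Circ}(\underline{a}_0,\dots,\underline{a}_{k-1},\overline{a}_k,\underline{a}_{k+1},\dots,\underline{a}_{n-1})$ for $k\in\{0,\dots,n-1\}$. *)

theory Defs
  imports Complex_Main
begin

text \<open>Vectors are \<open>nat \<Rightarrow> real\<close> and
  n x n matrices are \<open>nat \<Rightarrow> nat \<Rightarrow> real\<close>, indices ranging over \<open>{0..<n}\<close>.\<close>

definition mp_mv :: "nat \<Rightarrow> (nat \<Rightarrow> nat \<Rightarrow> real) \<Rightarrow> (nat \<Rightarrow> real) \<Rightarrow> nat \<Rightarrow> real" where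
  "mp_mv n A x = (\<lambda>i. Max ((\<lambda>j. A i j * x j) ` {..<n}))"

fun mp_pow_mv :: "nat \<Rightarrow> (nat \<Rightarrow> nat \<Rightarrow> real) \<Rightarrow> nat \<Rightarrow> (nat \<Rightarrow> real) \<Rightarrow> nat \<Rightarrow> real" where
  "mp_pow_mv n A 0 x = x"
| "mp_pow_mv n A (Suc t) x = mp_mv n A (mp_pow_mv n A t x)"

text \<open>Elementary cycles of the digraph on \<open>{0..<n}\<close>, as nonempty lists of distinct nodes.\<close>
definition cycle_gmean :: "(nat \<Rightarrow> nat \<Rightarrow> real) \<Rightarrow> nat list \<Rightarrow> real" where
  "cycle_gmean A cs = root (length cs)
     (\<Prod>l<length cs. A (cs ! l) (cs ! ((l + 1) mod length cs)))"

text \<open>Greatest max-algebraic eigenvalue = maximum cycle geometric mean.\<close>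
definition mp_lambda :: "nat \<Rightarrow> (nat \<Rightarrow> nat \<Rightarrow> real) \<Rightarrow> real" where
  "mp_lambda n A = Max (cycle_gmean A ` {cs. cs \<noteq> [] \<and> distinct cs \<and> set cs \<subseteq> {..<n}})"

definition attr :: "nat \<Rightarrow> (nat \<Rightarrow> nat \<Rightarrow> real) \<Rightarrow> (nat \<Rightarrow> real) \<Rightarrow> bool" where
  "attr n A x \<longleftrightarrow> (\<forall>i<n. 0 \<le> x i) \<and>
     (\<exists>t. \<forall>i<n. mp_pow_mv n A (Suc t) x i = mp_lambda n A * mp_pow_mv n A t x i)"

text \<open>A real interval given by (lower, upper, lower end closed?, upper end closed?).\<close>
type_synonym ivl = "real \<times> real \<times> bool \<times> bool"

definition lo :: "ivl \<Rightarrow> real" where "lo I = fst I"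
definition hi :: "ivl \<Rightarrow> real" where "hi I = fst (snd I)"

definition in_ivl :: "ivl \<Rightarrow> real \<Rightarrow> bool" where
  "in_ivl I v \<longleftrightarrow> (case I of (l, u, cl, cu) \<Rightarrow>
      (if cl then l \<le> v else l < v) \<and> (if cu then v \<le> u else v < u))"

definition valid_ivl :: "ivl \<Rightarrow> bool" where
  "valid_ivl I \<longleftrightarrow> 0 \<le> lo I \<and> lo I \<le> hi I \<and> (\<exists>v. in_ivl I v)"

definition circ :: "nat \<Rightarrow> (nat \<Rightarrow> real) \<Rightarrow> nat \<Rightarrow> nat \<Rightarrow> real" where
  "circ n a = (\<lambda>i j. a ((j + n - i) mod n))"

text \<open>\<open>x^{(k)}\<close> (0-indexed).\<close>
definition x_corner :: "(nat \<Rightarrow> ivl) \<Rightarrow> nat \<Rightarrow> nat \<Rightarrow> real" where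
  "x_corner X k = (\<lambda>i. if i = k then hi (X i) else lo (X i))"

definition A_corner :: "nat \<Rightarrow> (nat \<Rightarrow> ivl) \<Rightarrow> nat \<Rightarrow> nat \<Rightarrow> nat \<Rightarrow> real" where
  "A_corner n aI k = circ n (\<lambda>t. if t = k then hi (aI t) else lo (aI t))"

end

theory Submission
  imports Defs
begin

text \<open>Let \<open>a\<^sub>s\<close> be a largest entry of \<open>a\<close> and \<open>A = Circ(a)\<close>. Then \<open>\<lambda>(A) = a\<^sub>s\<close>: no cycle mean
  exceeds \<open>a\<^sub>s\<close>, and the orbit of the shift by \<open>s\<close> is a cycle of mean \<open>a\<^sub>s\<close>. By pigeonhole,
  every walk with at least \<open>n\<close> steps contains a block of \<open>d\<close> consecutive steps whose sum is
  \<open>d s\<close> modulo \<open>n\<close>; replacing it by \<open>d\<close> steps of size \<open>s\<close> keeps the end point and does not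
  decrease the weight. Hence \<open>(A^(t+1) x)_i = a\<^sub>s (A^t x)_(i+s)\<close> for \<open>t \<ge> n - 1\<close>, so that
  \<open>x \<in> Attr(A)\<close> iff \<open>A^(n-1) x\<close> is invariant under the shift by \<open>s\<close>, iff
  \<open>a\<^sub>s^(n+1) x_r \<le> (A^(n+1) x)_r\<close> for all \<open>r\<close>.

  These inequalities survive limits in \<open>(a, x)\<close>, and the corners are limits of points of the
  intervals. Conversely, for \<open>a\<close> and \<open>x\<close> in the intervals the \<open>r\<close>-th inequality follows from
  the one for \<open>A\<^sup>(\<^sup>s\<^sup>)\<close> and \<open>x\<^sup>(\<^sup>r\<^sup>)\<close>, since \<open>x \<ge> (x_r / x\<^sup>(\<^sup>r\<^sup>)_r) x\<^sup>(\<^sup>r\<^sup>)\<close> with equality at \<open>r\<close>,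
  and \<open>a\<^sub>s A\<^sup>(\<^sup>s\<^sup>) \<le> \<lambda>(A\<^sup>(\<^sup>s\<^sup>)) A\<close> entrywise.\<close>

definition circ_mv :: "nat \<Rightarrow> (nat \<Rightarrow> real) \<Rightarrow> (nat \<Rightarrow> real) \<Rightarrow> nat \<Rightarrow> real" where
  "circ_mv n a z i = Max ((\<lambda>k. a k * z ((i + k) mod n)) ` {..<n})"

fun circ_pow_mv :: "nat \<Rightarrow> (nat \<Rightarrow> real) \<Rightarrow> nat \<Rightarrow> (nat \<Rightarrow> real) \<Rightarrow> nat \<Rightarrow> real" where
  "circ_pow_mv n a 0 z = z"
| "circ_pow_mv n a (Suc t) z = circ_mv n a (circ_pow_mv n a t z)"

lemma shift_mod_inverse:
  assumes "(i::nat) < n" and "k < n"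
  shows "((i + k) mod n + n - i) mod n = k"
proof -
  have "((i + k) mod n + n - i) mod n = ((i + k) mod n + (n - i)) mod n"
    using assms(1) by simp
  also have "\<dots> = (i + k + (n - i)) mod n"
    by (simp add: mod_add_left_eq)
  also have "i + k + (n - i) = k + n"
    using assms(1) by simp
  finally show ?thesis
    using assms(2) by simp
qed

lemma shift_mod_image:
  assumes "0 < (n::nat)"
  shows "(\<lambda>k. (c + k) mod n) ` {..<n} = {..<n}"
proof -
  have "inj_on (\<lambda>k. (c mod n + k) mod n) {..<n}"
    by (rule inj_onI) (metis lessThan_iff shift_mod_inverse assms mod_less_divisor)
  then have "(\<lambda>k. (c mod n + k) mod n) ` {..<n} = {..<n}"
    by (intro endo_inj_surj) (auto simp: assms)
  then show ?thesis
    by (simp add: mod_add_left_eq)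
qed

lemma add_mult_mod_cycle:
  assumes "0 < (n::nat)"
  shows "((r + s) mod n + (n - 1) * s) mod n = r mod n"
proof -
  have "r + s + (n - 1) * s = r + s * n"
    using assms by (cases n) (auto simp: algebra_simps)
  then show ?thesis
    by (metis mod_add_left_eq mod_mult_self1)
qed

lemma shift_invariant_of_le:
  fixes u :: "nat \<Rightarrow> real"
  assumes n: "0 < n" and le: "\<And>i. i < n \<Longrightarrow> u i \<le> u ((i + s) mod n)"
  shows "i < n \<Longrightarrow> u ((i + s) mod n) = u i"
proof -
  assume i: "i < n"
  have orbit: "u j \<le> u ((j + m * s) mod n)" if "j < n" for j m
  proof (induction m)
    case (Suc m)
    have "u ((j + m * s) mod n) \<le> u (((j + m * s) mod n + s) mod n)"
      using le n by simp
    also have "((j + m * s) mod n + s) mod n = (j + Suc m * s) mod n"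
      by (simp add: mod_simps algebra_simps)
    finally show ?case
      using Suc.IH by simp
  qed (use that in simp)
  have "u ((i + s) mod n) \<le> u (((i + s) mod n + (n - 1) * s) mod n)"
    using orbit n by simp
  then show ?thesis
    using le[OF i] add_mult_mod_cycle[OF n, of i s] i by simp
qed

lemma shift_invariant_of_translate:
  fixes u :: "nat \<Rightarrow> real"
  assumes n: "0 < n" and inv: "\<And>i. i < n \<Longrightarrow> u ((c + (i + s) mod n) mod n) = u ((c + i) mod n)"
    and j: "j < n"
  shows "u ((j + s) mod n) = u j"
proof -
  have "j \<in> (\<lambda>k. (c + k) mod n) ` {..<n}"
    using shift_mod_image[OF n, of c] j by simp
  then obtain i where i: "i < n" "j = (c + i) mod n"
    by auto
  have "(j + s) mod n = (c + (i + s) mod n) mod n"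
    unfolding i(2) mod_add_left_eq mod_add_right_eq by (simp add: add.assoc)
  then show ?thesis
    using inv[OF i(1)] i(2) by simp
qed

lemma mp_mv_circ:
  assumes "i < n"
  shows "mp_mv n (circ n a) z i = circ_mv n a z i"
proof -
  have "(\<lambda>j. circ n a i j * z j) ` {..<n}
          = (\<lambda>j. circ n a i j * z j) ` (\<lambda>k. (i + k) mod n) ` {..<n}"
    using shift_mod_image[of n i] assms by simp
  also have "\<dots> = (\<lambda>k. a k * z ((i + k) mod n)) ` {..<n}"
    unfolding image_image circ_def using shift_mod_inverse[OF assms] by simp
  finally show ?thesis
    unfolding mp_mv_def circ_mv_def by simp
qed

lemma mp_pow_mv_circ:
  "i < n \<Longrightarrow> mp_pow_mv n (circ n a) t z i = circ_pow_mv n a t z i"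
proof (induction t arbitrary: i)
  case (Suc t)
  have "mp_pow_mv n (circ n a) (Suc t) z i = mp_mv n (circ n a) (circ_pow_mv n a t z) i"
    using Suc.IH by (auto simp: mp_mv_def intro!: arg_cong[where f = Max] image_cong)
  then show ?case
    using mp_mv_circ[OF Suc.prems] by simp
qed simp

lemma circ_mv_ge:
  "0 < n \<Longrightarrow> k < n \<Longrightarrow> a k * z ((i + k) mod n) \<le> circ_mv n a z i"
  unfolding circ_mv_def by (rule Max_ge) auto

lemma circ_mv_le:
  "0 < n \<Longrightarrow> (\<And>k. k < n \<Longrightarrow> a k * z ((i + k) mod n) \<le> c) \<Longrightarrow> circ_mv n a z i \<le> c"
  unfolding circ_mv_def by (rule Max.boundedI) auto

lemma circ_mv_attained:
  assumes "0 < n"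
  obtains k where "k < n" and "circ_mv n a z i = a k * z ((i + k) mod n)"
proof -
  have "circ_mv n a z i \<in> (\<lambda>k. a k * z ((i + k) mod n)) ` {..<n}"
    unfolding circ_mv_def by (rule Max_in) (use assms in auto)
  then show ?thesis
    using that by auto
qed

lemma circ_mv_cong:
  "0 < n \<Longrightarrow> (\<And>j. j < n \<Longrightarrow> z j = z' j) \<Longrightarrow> circ_mv n a z i = circ_mv n a z' i"
  unfolding circ_mv_def by (auto intro!: arg_cong[where f = Max] image_cong)

lemma circ_mv_mono:
  assumes n: "0 < n" and a: "\<And>k. k < n \<Longrightarrow> 0 \<le> a k" and z: "\<And>j. j < n \<Longrightarrow> z j \<le> z' j"
  shows "circ_mv n a z i \<le> circ_mv n a z' i"
proof (rule circ_mv_le[OF n])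
  fix k assume k: "k < n"
  have "a k * z ((i + k) mod n) \<le> a k * z' ((i + k) mod n)"
    using a[OF k] z[of "(i + k) mod n"] n by (simp add: mult_left_mono)
  also have "\<dots> \<le> circ_mv n a z' i"
    by (rule circ_mv_ge[OF n k])
  finally show "a k * z ((i + k) mod n) \<le> circ_mv n a z' i" .
qed

lemma circ_mv_scale:
  assumes n: "0 < n" and c: "0 \<le> c"
  shows "circ_mv n a (\<lambda>j. c * z j) i = c * circ_mv n a z i"
proof (rule antisym)
  show "circ_mv n a (\<lambda>j. c * z j) i \<le> c * circ_mv n a z i"
    by (rule circ_mv_le[OF n])
      (use circ_mv_ge[OF n] c in \<open>simp add: mult.left_commute mult_left_mono\<close>)
  obtain k where "k < n" and "circ_mv n a z i = a k * z ((i + k) mod n)"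
    using circ_mv_attained[OF n] .
  then show "c * circ_mv n a z i \<le> circ_mv n a (\<lambda>j. c * z j) i"
    using circ_mv_ge[OF n, of k a "\<lambda>j. c * z j" i] by (simp add: mult.left_commute)
qed

lemma circ_mv_zero:
  assumes n: "0 < n" and a: "\<And>k. k < n \<Longrightarrow> a k = 0"
  shows "circ_mv n a z i = 0"
  using circ_mv_le[OF n, of a z i 0] circ_mv_ge[OF n n, of a z i] a a[OF n] by simp

lemma circ_pow_mv_nonneg:
  assumes "0 < n" and "\<And>k. k < n \<Longrightarrow> 0 \<le> a k" and "\<And>j. j < n \<Longrightarrow> 0 \<le> y j"
  shows "j < n \<Longrightarrow> 0 \<le> circ_pow_mv n a t y j"
proof (induction t arbitrary: j)
  case (Suc t)
  have "0 \<le> a 0 * circ_pow_mv n a t y ((j + 0) mod n)"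
    using assms Suc.IH by simp
  also have "\<dots> \<le> circ_pow_mv n a (Suc t) y j"
    using circ_mv_ge[OF assms(1) assms(1)] by simp
  finally show ?case .
qed (use assms in simp)

lemma circ_pow_mv_mono:
  "0 < n \<Longrightarrow> (\<And>k. k < n \<Longrightarrow> 0 \<le> a k) \<Longrightarrow> (\<And>j. j < n \<Longrightarrow> y j \<le> y' j) \<Longrightarrow> i < n
     \<Longrightarrow> circ_pow_mv n a t y i \<le> circ_pow_mv n a t y' i"
  by (induction t arbitrary: i) (auto intro: circ_mv_mono)

lemma circ_pow_mv_scale:
  assumes n: "0 < n" and c: "0 \<le> c"
  shows "i < n \<Longrightarrow> circ_pow_mv n a t (\<lambda>j. c * y j) i = c * circ_pow_mv n a t y i"
proof (induction t arbitrary: i)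
  case (Suc t)
  have "circ_pow_mv n a (Suc t) (\<lambda>j. c * y j) i = circ_mv n a (\<lambda>j. c * circ_pow_mv n a t y j) i"
    unfolding circ_pow_mv.simps by (rule circ_mv_cong) (use Suc n in auto)
  then show ?case
    by (simp add: circ_mv_scale[OF n c])
qed simp

lemma circ_pow_mv_add: "circ_pow_mv n a (t + m) y = circ_pow_mv n a t (circ_pow_mv n a m y)"
  by (induction t) auto

lemma circ_pow_mv_compare:
  assumes n: "0 < n" and a: "\<And>k. k < n \<Longrightarrow> 0 \<le> a k" and a': "\<And>k. k < n \<Longrightarrow> 0 \<le> a' k"
    and l: "0 \<le> l" "0 \<le> l'" and dom: "\<And>k. k < n \<Longrightarrow> l * a' k \<le> l' * a k"
    and y: "\<And>j. j < n \<Longrightarrow> 0 \<le> y j"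
  shows "l ^ m * circ_pow_mv n a' m y i \<le> l' ^ m * circ_pow_mv n a m y i"
proof (induction m arbitrary: i)
  case (Suc m)
  obtain k where k: "k < n"
    and max: "circ_pow_mv n a' (Suc m) y i = a' k * circ_pow_mv n a' m y ((i + k) mod n)"
    using circ_mv_attained[OF n] by (metis circ_pow_mv.simps(2))
  have j: "(i + k) mod n < n"
    using n by simp
  have "l ^ Suc m * circ_pow_mv n a' (Suc m) y i
          = (l * a' k) * (l ^ m * circ_pow_mv n a' m y ((i + k) mod n))"
    unfolding max by (simp add: algebra_simps)
  also have "\<dots> \<le> (l' * a k) * (l' ^ m * circ_pow_mv n a m y ((i + k) mod n))"
    by (intro mult_mono dom k Suc.IH mult_nonneg_nonneg zero_le_power
        circ_pow_mv_nonneg[OF n a' y j] l a)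
  also have "\<dots> = l' ^ Suc m * (a k * circ_pow_mv n a m y ((i + k) mod n))"
    by (simp add: algebra_simps)
  also have "\<dots> \<le> l' ^ Suc m * circ_pow_mv n a (Suc m) y i"
    using circ_mv_ge[OF n k] l by (simp add: mult_left_mono)
  finally show ?case .
qed simp

subsection \<open>Walks\<close>

definition walk_weight :: "nat \<Rightarrow> (nat \<Rightarrow> real) \<Rightarrow> (nat \<Rightarrow> real) \<Rightarrow> nat \<Rightarrow> nat list \<Rightarrow> real" where
  "walk_weight n a y i ks = prod_list (map a ks) * y ((i + sum_list ks) mod n)"

lemma walk_weight_Cons: "walk_weight n a y i (k # ks) = a k * walk_weight n a y ((i + k) mod n) ks"
  unfolding walk_weight_def by (simp add: mod_simps add.assoc)

lemma prod_list_le_power: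
  fixes f :: "'a \<Rightarrow> 'b::linordered_semidom"
  assumes "\<And>x. x \<in> set xs \<Longrightarrow> 0 \<le> f x \<and> f x \<le> c"
  shows "prod_list (map f xs) \<le> c ^ length xs"
  using assms
proof (induction xs)
  case (Cons x xs)
  then have "f x * prod_list (map f xs) \<le> c * c ^ length xs"
    by (intro mult_mono prod_list_nonneg) (auto intro: order_trans)
  then show ?case
    by simp
qed simp

lemma walk_weight_le_circ_pow_mv:
  assumes n: "0 < n" and a: "\<And>k. k < n \<Longrightarrow> 0 \<le> a k" and y: "\<And>j. j < n \<Longrightarrow> 0 \<le> y j"
  shows "set ks \<subseteq> {..<n} \<Longrightarrow> i < n \<Longrightarrow> walk_weight n a y i ks \<le> circ_pow_mv n a (length ks) y i"
proof (induction ks arbitrary: i)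
  case Nil
  then show ?case
    by (simp add: walk_weight_def)
next
  case (Cons k ks)
  then have k: "k < n"
    by simp
  have "walk_weight n a y i (k # ks) \<le> a k * circ_pow_mv n a (length ks) y ((i + k) mod n)"
    unfolding walk_weight_Cons using Cons a[OF k] by (simp add: mult_left_mono)
  also have "\<dots> \<le> circ_pow_mv n a (length (k # ks)) y i"
    using circ_mv_ge[OF n k] by simp
  finally show ?case .
qed

lemma circ_pow_mv_eq_walk_weight:
  assumes "0 < n"
  shows "i < n \<Longrightarrow> \<exists>ks. set ks \<subseteq> {..<n} \<and> length ks = t \<and> circ_pow_mv n a t y i = walk_weight n a y i ks"
proof (induction t arbitrary: i)
  case 0
  then show ?case
    by (intro exI[of _ "[]"]) (simp add: walk_weight_def)
next
  case (Suc t)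
  obtain k where k: "k < n"
    and max: "circ_pow_mv n a (Suc t) y i = a k * circ_pow_mv n a t y ((i + k) mod n)"
    using circ_mv_attained[OF assms] by (metis circ_pow_mv.simps(2))
  obtain ks where "set ks \<subseteq> {..<n}" "length ks = t"
    and "circ_pow_mv n a t y ((i + k) mod n) = walk_weight n a y ((i + k) mod n) ks"
    using Suc.IH[of "(i + k) mod n"] assms by auto
  then show ?case
    using k max by (intro exI[of _ "k # ks"]) (simp add: walk_weight_Cons)
qed

lemma circ_pow_mv_replicate_ge:
  assumes n: "0 < n" and a: "\<And>k. k < n \<Longrightarrow> 0 \<le> a k" and y: "\<And>j. j < n \<Longrightarrow> 0 \<le> y j"
    and "s < n" and "i < n"
  shows "a s ^ t * y ((i + t * s) mod n) \<le> circ_pow_mv n a t y i"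
  using walk_weight_le_circ_pow_mv[where a = a and y = y and ks = "replicate t s" and i = i, OF n a y]
    assms(4,5)
  by (simp add: walk_weight_def prod_list_replicate sum_list_replicate algebra_simps subset_iff)

lemma exists_block_sum_mod:
  fixes ks :: "nat list"
  assumes n: "0 < n" and len: "n \<le> length ks"
  shows "\<exists>p d. 0 < d \<and> p + d \<le> length ks \<and> sum_list (take d (drop p ks)) mod n = (d * s) mod n"
proof -
  define f where "f j = (int (sum_list (take j ks)) - int j * int s) mod int n" for j
  have "f ` {..n} \<subseteq> {0..<int n}"
    unfolding f_def using n by auto
  then have "card (f ` {..n}) < card {..n}"
    using card_mono[of "{0..<int n}" "f ` {..n}"] by simp
  then have "\<not> inj_on f {..n}"
    using card_image by fastforce
  then obtain p q where pq: "p < q" "q \<le> n" "f p = f q"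
    unfolding inj_on_def by (metis atMost_iff le_trans less_imp_le_nat linorder_neqE_nat)
  define d where "d = q - p"
  define B where "B = sum_list (take d (drop p ks))"
  have "sum_list (take q ks) = sum_list (take p ks) + B"
    using pq(1) unfolding B_def d_def by (metis add_diff_inverse_nat not_less_iff_gr_or_eq sum_list_append take_add)
  moreover have "int q = int d + int p"
    using pq(1) unfolding d_def by simp
  ultimately have "int n dvd int (d * s) - int B"
    using pq(3) unfolding f_def by (simp add: mod_eq_dvd_iff algebra_simps)
  then have "int (d * s) mod int n = int B mod int n"
    by (simp add: mod_eq_dvd_iff)
  then have "B mod n = (d * s) mod n"
    by (metis of_nat_eq_iff zmod_int)
  moreover have "0 < d" "p + d \<le> length ks"
    using pq len unfolding d_def by auto
  ultimately show ?thesis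
    unfolding B_def by blast
qed

text \<open>The block of \<open>d\<close> steps summing to \<open>d s\<close> modulo \<open>n\<close> is replaced by \<open>d\<close> steps of size \<open>s\<close>;
  one of them is moved to the front.\<close>

lemma walk_weight_le_max_step:
  assumes n: "0 < n" and a: "\<And>k. k < n \<Longrightarrow> 0 \<le> a k" and y: "\<And>j. j < n \<Longrightarrow> 0 \<le> y j"
    and s: "s < n" and max: "\<And>k. k < n \<Longrightarrow> a k \<le> a s"
    and ks: "set ks \<subseteq> {..<n}" and len: "n \<le> length ks"
  obtains ks' where "set ks' \<subseteq> {..<n}" and "length ks' = length ks - 1"
    and "walk_weight n a y i ks \<le> a s * walk_weight n a y ((i + s) mod n) ks'"
proof -
  obtain p d where d: "0 < d" "p + d \<le> length ks"
    and block: "sum_list (take d (drop p ks)) mod n = (d * s) mod n"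
    using exists_block_sum_mod[OF n len] by blast
  define R1 B R2 where "R1 = take p ks" and "B = take d (drop p ks)" and "R2 = drop (p + d) ks"
  have split: "ks = R1 @ B @ R2"
    unfolding R1_def B_def R2_def by (metis append_take_drop_id drop_drop add.commute)
  have lenB: "length B = d"
    unfolding B_def using d by auto
  define ks' where "ks' = R1 @ replicate (d - 1) s @ R2"
  have set': "set ks' \<subseteq> {..<n}"
    using ks s unfolding split ks'_def by auto
  have len': "length ks' = length ks - 1"
    using lenB d unfolding split ks'_def by auto
  have "(i + sum_list ks) mod n = (i + sum_list R1 + sum_list R2 + sum_list B) mod n"
    unfolding split by (simp add: algebra_simps)
  also have "\<dots> = (i + sum_list R1 + sum_list R2 + d * s) mod n"
    using block unfolding B_def[symmetric] by (metis mod_add_right_eq)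
  also have "\<dots> = (i + s + sum_list ks') mod n"
    using d unfolding ks'_def by (cases d) (simp_all add: sum_list_replicate algebra_simps)
  finally have endpoint: "(i + sum_list ks) mod n = ((i + s) mod n + sum_list ks') mod n"
    by (simp add: mod_add_left_eq)
  have sets: "set R1 \<subseteq> {..<n}" "set B \<subseteq> {..<n}" "set R2 \<subseteq> {..<n}"
    using ks unfolding split by simp_all
  then have "prod_list (map a B) \<le> a s ^ d"
    using a max lenB by (metis prod_list_le_power subsetD lessThan_iff)
  have "prod_list (map a ks) = prod_list (map a B) * (prod_list (map a R1) * prod_list (map a R2))"
    unfolding split by (simp add: ac_simps)
  also have "\<dots> \<le> a s ^ d * (prod_list (map a R1) * prod_list (map a R2))"
    by (rule mult_right_mono[OF \<open>prod_list (map a B) \<le> a s ^ d\<close>])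
      (use sets a in \<open>auto intro!: mult_nonneg_nonneg prod_list_nonneg simp: subset_iff\<close>)
  also have "\<dots> = a s * prod_list (map a ks')"
    using d unfolding ks'_def by (cases d) (simp_all add: prod_list_replicate)
  finally have "prod_list (map a ks) * y ((i + sum_list ks) mod n)
                  \<le> a s * prod_list (map a ks') * y ((i + sum_list ks) mod n)"
    using y n by (simp add: mult_right_mono)
  then show ?thesis
    using that[OF set' len'] unfolding walk_weight_def endpoint by (simp add: mult.assoc)
qed

subsection \<open>Powers of a circulant beyond \<open>n - 1\<close>\<close>

lemma circ_pow_mv_Suc_max_step:
  assumes n: "0 < n" and a: "\<And>k. k < n \<Longrightarrow> 0 \<le> a k" and y: "\<And>j. j < n \<Longrightarrow> 0 \<le> y j"
    and s: "s < n" and max: "\<And>k. k < n \<Longrightarrow> a k \<le> a s" and t: "n \<le> Suc t" and i: "i < n"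
  shows "circ_pow_mv n a (Suc t) y i = a s * circ_pow_mv n a t y ((i + s) mod n)"
proof (rule antisym)
  obtain ks where ks: "set ks \<subseteq> {..<n}" "length ks = Suc t"
    and eq: "circ_pow_mv n a (Suc t) y i = walk_weight n a y i ks"
    using circ_pow_mv_eq_walk_weight[OF n i] by blast
  have "n \<le> length ks"
    using ks(2) t by simp
  then obtain ks' where ks': "set ks' \<subseteq> {..<n}" "length ks' = length ks - 1"
    and le: "walk_weight n a y i ks \<le> a s * walk_weight n a y ((i + s) mod n) ks'"
    using walk_weight_le_max_step[where a = a and y = y, OF n a y s max ks(1)] by blast
  have "walk_weight n a y ((i + s) mod n) ks' \<le> circ_pow_mv n a t y ((i + s) mod n)"
    using walk_weight_le_circ_pow_mv[where a = a and y = y, OF n a y ks'(1)] ks'(2) ks(2) n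
    by simp
  then show "circ_pow_mv n a (Suc t) y i \<le> a s * circ_pow_mv n a t y ((i + s) mod n)"
    using le a[OF s] unfolding eq by (meson mult_left_mono order_trans)
  show "a s * circ_pow_mv n a t y ((i + s) mod n) \<le> circ_pow_mv n a (Suc t) y i"
    using circ_mv_ge[OF n s] by simp
qed

lemma circ_pow_mv_max_steps:
  assumes n: "0 < n" and a: "\<And>k. k < n \<Longrightarrow> 0 \<le> a k" and y: "\<And>j. j < n \<Longrightarrow> 0 \<le> y j"
    and s: "s < n" and max: "\<And>k. k < n \<Longrightarrow> a k \<le> a s"
  shows "i < n \<Longrightarrow>
    circ_pow_mv n a (n - 1 + m) y i = a s ^ m * circ_pow_mv n a (n - 1) y ((i + m * s) mod n)"
proof (induction m arbitrary: i)
  case (Suc m)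
  have "circ_pow_mv n a (n - 1 + Suc m) y i = a s * circ_pow_mv n a (n - 1 + m) y ((i + s) mod n)"
    using circ_pow_mv_Suc_max_step[where a = a and y = y, OF n a y s max _ Suc.prems, of "n - 1 + m"] n
    by simp
  also have "\<dots> = a s ^ Suc m * circ_pow_mv n a (n - 1) y ((i + Suc m * s) mod n)"
    unfolding Suc.IH[OF mod_less_divisor[OF n]] by (simp add: mod_simps algebra_simps)
  finally show ?case .
qed simp

lemma circ_pow_mv_eigen_persists:
  assumes n: "0 < n" and c: "0 \<le> c"
    and eigen: "\<And>i. i < n \<Longrightarrow> circ_pow_mv n a (Suc t) y i = c * circ_pow_mv n a t y i"
  shows "i < n \<Longrightarrow> circ_pow_mv n a (Suc (t + m)) y i = c * circ_pow_mv n a (t + m) y i"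
proof (induction m arbitrary: i)
  case (Suc m)
  have "circ_pow_mv n a (Suc (t + Suc m)) y i = circ_mv n a (\<lambda>j. c * circ_pow_mv n a (t + m) y j) i"
    by (simp del: circ_pow_mv.simps(2) add: circ_pow_mv.simps(2)[of _ _ "Suc (t + m)"])
      (rule circ_mv_cong, use Suc.IH n in auto)
  then show ?case
    by (simp add: circ_mv_scale[OF n c])
qed (use eigen in simp)

subsection \<open>The eigenvalue of a circulant\<close>

lemma ex_argmax_lessThan:
  fixes a :: "nat \<Rightarrow> real"
  assumes "0 < n"
  obtains s where "s < n" and "a s = Max (a ` {..<n})"
proof -
  have "Max (a ` {..<n}) \<in> a ` {..<n}"
    by (rule Max_in) (use assms in auto)
  then show ?thesis
    using that by auto
qed

lemma finite_elementary_cycles: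
  fixes n :: nat
  shows "finite {cs. cs \<noteq> [] \<and> distinct cs \<and> set cs \<subseteq> {..<n}}"
proof (rule finite_subset)
  show "{cs. cs \<noteq> [] \<and> distinct cs \<and> set cs \<subseteq> {..<n}} \<subseteq> {xs. set xs \<subseteq> {..<n} \<and> length xs \<le> n}"
    by (auto simp flip: distinct_card intro: card_mono[of "{..<n}", simplified])
qed (rule finite_lists_length_le, simp)

lemma cycle_gmean_circ_le:
  assumes n: "0 < n" and a: "\<And>k. k < n \<Longrightarrow> 0 \<le> a k" and cs: "cs \<noteq> []"
  shows "cycle_gmean (circ n a) cs \<le> Max (a ` {..<n})"
proof -
  define M where "M = Max (a ` {..<n})"
  define L where "L = length cs"
  have L: "0 < L"
    using cs unfolding L_def by simp
  have entry: "0 \<le> circ n a i j \<and> circ n a i j \<le> M" for i j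
    unfolding circ_def M_def using a n by simp
  have "(\<Prod>l<L. circ n a (cs ! l) (cs ! ((l + 1) mod L))) \<le> M ^ L"
    using prod_mono[of "{..<L}" "\<lambda>l. circ n a (cs ! l) (cs ! ((l + 1) mod L))" "\<lambda>_. M"] entry
    by simp
  then have "cycle_gmean (circ n a) cs \<le> root L (M ^ L)"
    unfolding cycle_gmean_def L_def[symmetric] by (rule real_root_le_mono[OF L])
  also have "root L (M ^ L) = M"
    using entry[of 0 0] by (simp add: real_root_pos2[OF L])
  finally show ?thesis
    unfolding M_def .
qed

text \<open>The witness is the orbit of \<open>0\<close> under the shift by \<open>s\<close>.\<close>

lemma exists_shift_cycle:
  fixes n s :: nat
  assumes n: "0 < n"
  obtains cs where "cs \<noteq> []" and "distinct cs" and "set cs \<subseteq> {..<n}"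
    and "\<And>l. l < length cs \<Longrightarrow> cs ! ((l + 1) mod length cs) = (cs ! l + s) mod n"
proof -
  define p where "p = (LEAST p::nat. 0 < p \<and> (p * s) mod n = 0)"
  have p: "0 < p" "(p * s) mod n = 0"
    using LeastI[of "\<lambda>p. 0 < p \<and> (p * s) mod n = 0" n] n unfolding p_def by simp_all
  have p_min: "(q * s) mod n \<noteq> 0" if "0 < q" "q < p" for q
    using not_less_Least[of q "\<lambda>p. 0 < p \<and> (p * s) mod n = 0"] that unfolding p_def by simp
  define cs where "cs = map (\<lambda>l. (l * s) mod n) [0..<p]"
  have "inj_on (\<lambda>l. (l * s) mod n) {..<p}"
  proof (rule linorder_inj_onI')
    fix l l' assume l: "l \<in> {..<p}" "l' \<in> {..<p}" "l < l'"
    show "(l * s) mod n \<noteq> (l' * s) mod n"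
    proof
      assume "(l * s) mod n = (l' * s) mod n"
      moreover have "l' * s = l * s + (l' - l) * s"
        using l(3) by (simp add: diff_mult_distrib)
      ultimately have "((l' - l) * s) mod n = 0"
        using mod_eq_dvd_iff_nat[of "l * s" "l' * s" n] by simp
      then show False
        using p_min[of "l' - l"] l by (simp add: less_imp_diff_less)
    qed
  qed
  then have "distinct cs"
    unfolding cs_def by (simp add: distinct_map lessThan_atLeast0)
  have len: "length cs = p"
    unfolding cs_def by simp
  have nth: "cs ! l = (l * s) mod n" if "l < p" for l
    using that unfolding cs_def by simp
  have "cs ! ((l + 1) mod length cs) = (cs ! l + s) mod n" if l: "l < length cs" for l
  proof (cases "l + 1 < p")
    case True
    then show ?thesis
      using l unfolding len by (simp add: nth mod_simps algebra_simps)
  next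
    case False
    then have "p = l + 1"
      using l unfolding len by simp
    then show ?thesis
      using p l unfolding len by (simp add: nth mod_simps algebra_simps)
  qed
  moreover have "cs \<noteq> []" "set cs \<subseteq> {..<n}"
    using p(1) n unfolding cs_def by auto
  ultimately show ?thesis
    using that \<open>distinct cs\<close> by blast
qed

lemma mp_lambda_circ:
  assumes n: "0 < n" and a: "\<And>k. k < n \<Longrightarrow> 0 \<le> a k"
  shows "mp_lambda n (circ n a) = Max (a ` {..<n})"
  unfolding mp_lambda_def
proof (rule Max_eqI)
  obtain s where s: "s < n" "a s = Max (a ` {..<n})"
    using ex_argmax_lessThan[OF n] .
  obtain cs where cs: "cs \<noteq> []" "distinct cs" "set cs \<subseteq> {..<n}"
    and step: "\<And>l. l < length cs \<Longrightarrow> cs ! ((l + 1) mod length cs) = (cs ! l + s) mod n"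
    using exists_shift_cycle[OF n, of s] by blast
  have "circ n a (cs ! l) (cs ! ((l + 1) mod length cs)) = a s" if "l < length cs" for l
    using step[OF that] shift_mod_inverse[of "cs ! l" n s] cs(3) s(1) that
    unfolding circ_def by (simp add: subset_iff)
  then have "cycle_gmean (circ n a) cs = a s"
    unfolding cycle_gmean_def using cs(1) a[OF s(1)] by (simp add: real_root_pos2)
  then show "Max (a ` {..<n}) \<in> cycle_gmean (circ n a) ` {cs. cs \<noteq> [] \<and> distinct cs \<and> set cs \<subseteq> {..<n}}"
    using cs s(2) by force
qed (auto simp: finite_elementary_cycles cycle_gmean_circ_le[OF n a])

subsection \<open>A closed characterisation of the attraction set\<close>

definition circ_attr_ineq :: "nat \<Rightarrow> (nat \<Rightarrow> real) \<Rightarrow> (nat \<Rightarrow> real) \<Rightarrow> nat \<Rightarrow> bool" where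
  "circ_attr_ineq n a y r \<longleftrightarrow> Max (a ` {..<n}) ^ (n + 1) * y r \<le> circ_pow_mv n a (n + 1) y r"

lemma circ_eventually_eigen_imp_ineq:
  assumes n: "0 < n" and a: "\<And>k. k < n \<Longrightarrow> 0 \<le> a k" and y: "\<And>j. j < n \<Longrightarrow> 0 \<le> y j"
    and s: "s < n" and max: "\<And>k. k < n \<Longrightarrow> a k \<le> a s" and pos: "0 < a s"
    and eigen: "\<And>i. i < n \<Longrightarrow> circ_pow_mv n a (Suc t) y i = a s * circ_pow_mv n a t y i"
    and r: "r < n"
  shows "a s ^ (n + 1) * y r \<le> circ_pow_mv n a (n + 1) y r"
proof -
  define u where "u = circ_pow_mv n a (n - 1) y"
  have iter: "circ_pow_mv n a (n - 1 + m) y i = a s ^ m * u ((i + m * s) mod n)" if "i < n" for m i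
    unfolding u_def by (rule circ_pow_mv_max_steps[where a = a and y = y, OF n a y s max that])
  have "u ((Suc t * s + (i + s) mod n) mod n) = u ((Suc t * s + i) mod n)" if i: "i < n" for i
  proof -
    have steps: "n - 1 + Suc (Suc t) = Suc (t + n)" "n - 1 + Suc t = t + n"
      using n by auto
    have "a s ^ Suc (Suc t) * u ((i + Suc (Suc t) * s) mod n)
            = a s ^ Suc (Suc t) * u ((i + Suc t * s) mod n)"
      using iter[OF i, of "Suc (Suc t)"] iter[OF i, of "Suc t"] a[OF s]
        circ_pow_mv_eigen_persists[OF n _ eigen i, of n]
      unfolding steps by (simp add: mult.assoc)
    then have "u ((i + Suc (Suc t) * s) mod n) = u ((i + Suc t * s) mod n)"
      using pos by simp
    moreover have "(Suc t * s + (i + s) mod n) mod n = (i + Suc (Suc t) * s) mod n"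
      unfolding mod_add_right_eq by (simp add: algebra_simps)
    ultimately show ?thesis
      by (simp add: add.commute)
  qed
  then have inv: "u ((j + s) mod n) = u j" if "j < n" for j
    using shift_invariant_of_translate[OF n _ that] by blast
  have "a s ^ (n - 1) * y r \<le> u ((r + s) mod n)"
    using circ_pow_mv_replicate_ge[where a = a and y = y and i = "(r + s) mod n" and t = "n - 1",
        OF n a y s] add_mult_mod_cycle[OF n, of r s] r n
    unfolding u_def by simp
  also have "\<dots> = u ((r + 2 * s) mod n)"
    using inv[of "(r + s) mod n"] n by (simp add: mod_add_left_eq add.assoc mult_2)
  finally have "a s ^ 2 * (a s ^ (n - 1) * y r) \<le> a s ^ 2 * u ((r + 2 * s) mod n)"
    using pos by simp
  moreover have "n + 1 = 2 + (n - 1)"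
    using n by simp
  then have "a s ^ (n + 1) = a s ^ 2 * a s ^ (n - 1)"
    by (simp only: power_add)
  moreover have "n - 1 + 2 = n + 1"
    using n by simp
  then have "circ_pow_mv n a (n + 1) y r = a s ^ 2 * u ((r + 2 * s) mod n)"
    using iter[OF r, of 2] by (simp only:)
  ultimately show ?thesis
    by (simp only: mult.assoc)
qed

lemma circ_ineq_imp_eventually_eigen:
  assumes n: "0 < n" and a: "\<And>k. k < n \<Longrightarrow> 0 \<le> a k" and y: "\<And>j. j < n \<Longrightarrow> 0 \<le> y j"
    and s: "s < n" and max: "\<And>k. k < n \<Longrightarrow> a k \<le> a s" and pos: "0 < a s"
    and ineq: "\<And>r. r < n \<Longrightarrow> a s ^ (n + 1) * y r \<le> circ_pow_mv n a (n + 1) y r"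
    and i: "i < n"
  shows "circ_pow_mv n a (Suc (n - 1)) y i = a s * circ_pow_mv n a (n - 1) y i"
proof -
  define u where "u = circ_pow_mv n a (n - 1) y"
  have "u j \<le> u ((j + s) mod n)" if j: "j < n" for j
  proof -
    have "a s ^ (n + 1) * u j = circ_pow_mv n a (n - 1) (\<lambda>r. a s ^ (n + 1) * y r) j"
      unfolding u_def using circ_pow_mv_scale[OF n _ j] pos by simp
    also have "\<dots> \<le> circ_pow_mv n a (n - 1) (circ_pow_mv n a (n + 1) y) j"
      by (rule circ_pow_mv_mono[where a = a, OF n a ineq j])
    also have "\<dots> = a s ^ (n + 1) * u ((j + (n + 1) * s) mod n)"
      unfolding u_def circ_pow_mv_add[symmetric]
      by (rule circ_pow_mv_max_steps[where a = a and y = y, OF n a y s max j])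
    also have "(j + (n + 1) * s) mod n = (j + s) mod n"
      by (metis add.assoc add.commute mod_mult_self1 mult.commute mult_Suc Suc_eq_plus1)
    finally show ?thesis
      using pos by simp
  qed
  then have "u ((i + s) mod n) = u i"
    using shift_invariant_of_le[OF n _ i] by blast
  then show ?thesis
    using circ_pow_mv_Suc_max_step[where a = a and y = y and t = "n - 1", OF n a y s max _ i] n
    unfolding u_def by simp
qed

lemma attr_circ_iff:
  assumes n: "0 < n" and a: "\<And>k. k < n \<Longrightarrow> 0 \<le> a k" and y: "\<And>j. j < n \<Longrightarrow> 0 \<le> y j"
  shows "attr n (circ n a) y \<longleftrightarrow> (\<forall>r<n. circ_attr_ineq n a y r)"
proof -
  obtain s where s: "s < n" "a s = Max (a ` {..<n})"
    using ex_argmax_lessThan[OF n] .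
  have max: "\<And>k. k < n \<Longrightarrow> a k \<le> a s"
    using s(2) by simp
  have attr: "attr n (circ n a) y \<longleftrightarrow> (\<exists>t. \<forall>i<n. circ_pow_mv n a (Suc t) y i = a s * circ_pow_mv n a t y i)"
    unfolding attr_def using y
    by (auto simp del: mp_pow_mv.simps simp: mp_pow_mv_circ mp_lambda_circ[OF n a] s(2))
  show ?thesis
  proof (cases "a s = 0")
    case True
    then have "\<And>k. k < n \<Longrightarrow> a k = 0"
      using a max by (metis order.antisym)
    then show ?thesis
      unfolding attr circ_attr_ineq_def s(2)[symmetric] True
      using circ_pow_mv_nonneg[OF n a y] n by (auto intro!: exI[of _ 0] simp: circ_mv_zero)
  next
    case False
    then have pos: "0 < a s"
      using a[OF s(1)] by simp
    show ?thesis
      unfolding attr circ_attr_ineq_def s(2)[symmetric]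
      using circ_eventually_eigen_imp_ineq[where a = a and y = y, OF n a y s(1) max pos]
        circ_ineq_imp_eventually_eigen[where a = a and y = y, OF n a y s(1) max pos] by blast
  qed
qed

subsection \<open>Stability of the characterisation\<close>

lemma tendsto_Max_image:
  fixes f :: "nat \<Rightarrow> 'b \<Rightarrow> real"
  assumes "finite K" "K \<noteq> {}" and "\<And>k. k \<in> K \<Longrightarrow> ((\<lambda>x. f x k) \<longlongrightarrow> L k) sequentially"
  shows "((\<lambda>x. Max (f x ` K)) \<longlongrightarrow> Max (L ` K)) sequentially"
  using assms
proof (induction K rule: finite_ne_induct)
  case (insert k K)
  then show ?case
    by (simp add: tendsto_max)
qed simp

lemma circ_pow_mv_tendsto:
  assumes n: "0 < n"
    and A: "\<And>t. t < n \<Longrightarrow> ((\<lambda>k. A k t) \<longlongrightarrow> a t) sequentially"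
    and Y: "\<And>m. m < n \<Longrightarrow> ((\<lambda>k. Y k m) \<longlongrightarrow> y m) sequentially"
  shows "i < n \<Longrightarrow> ((\<lambda>k. circ_pow_mv n (A k) T (Y k) i) \<longlongrightarrow> circ_pow_mv n a T y i) sequentially"
proof (induction T arbitrary: i)
  case (Suc T)
  have "\<And>t. t \<in> {..<n} \<Longrightarrow> ((\<lambda>k. A k t * circ_pow_mv n (A k) T (Y k) ((i + t) mod n))
          \<longlongrightarrow> a t * circ_pow_mv n a T y ((i + t) mod n)) sequentially"
    using A Suc.IH n by (auto intro!: tendsto_mult)
  then show ?case
    unfolding circ_pow_mv.simps circ_mv_def using n by (intro tendsto_Max_image) auto
qed (use Y in simp)

lemma circ_attr_ineq_limit:
  assumes n: "0 < n"
    and A: "\<And>t. t < n \<Longrightarrow> ((\<lambda>k. A k t) \<longlongrightarrow> a t) sequentially"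
    and Y: "\<And>m. m < n \<Longrightarrow> ((\<lambda>k. Y k m) \<longlongrightarrow> y m) sequentially"
    and ineq: "\<And>k. circ_attr_ineq n (A k) (Y k) r" and r: "r < n"
  shows "circ_attr_ineq n a y r"
  unfolding circ_attr_ineq_def
proof (rule tendsto_le[OF _ circ_pow_mv_tendsto[OF n A Y r]])
  show "((\<lambda>k. Max (A k ` {..<n}) ^ (n + 1) * Y k r) \<longlongrightarrow> Max (a ` {..<n}) ^ (n + 1) * y r) sequentially"
    using A Y r n by (intro tendsto_intros tendsto_Max_image) auto
qed (use ineq in \<open>auto simp: circ_attr_ineq_def intro!: always_eventually\<close>)

lemma circ_attr_ineq_rescale:
  assumes n: "0 < n" and a: "\<And>k. k < n \<Longrightarrow> 0 \<le> a k" and z: "\<And>j. j < n \<Longrightarrow> 0 \<le> z j"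
    and c: "0 \<le> c" and below: "\<And>j. j < n \<Longrightarrow> c * z j \<le> x j" and eq: "x r = c * z r"
    and r: "r < n" and ineq: "circ_attr_ineq n a z r"
  shows "circ_attr_ineq n a x r"
proof -
  have "Max (a ` {..<n}) ^ (n + 1) * x r \<le> c * circ_pow_mv n a (n + 1) z r"
    using ineq c unfolding circ_attr_ineq_def eq by (simp add: mult.left_commute mult_left_mono)
  also have "\<dots> = circ_pow_mv n a (n + 1) (\<lambda>j. c * z j) r"
    by (rule circ_pow_mv_scale[OF n c r, symmetric])
  also have "\<dots> \<le> circ_pow_mv n a (n + 1) x r"
    by (rule circ_pow_mv_mono[OF n a below r])
  finally show ?thesis
    unfolding circ_attr_ineq_def .
qed

lemma circ_attr_ineq_dominated:
  assumes n: "0 < n" and a: "\<And>k. k < n \<Longrightarrow> 0 \<le> a k" and a': "\<And>k. k < n \<Longrightarrow> 0 \<le> a' k"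
    and z: "\<And>j. j < n \<Longrightarrow> 0 \<le> z j"
    and le: "Max (a ` {..<n}) \<le> Max (a' ` {..<n})"
    and dom: "\<And>k. k < n \<Longrightarrow> Max (a ` {..<n}) * a' k \<le> Max (a' ` {..<n}) * a k"
    and r: "r < n" and ineq: "circ_attr_ineq n a' z r"
  shows "circ_attr_ineq n a z r"
proof -
  define M M' where "M = Max (a ` {..<n})" and "M' = Max (a' ` {..<n})"
  have "a 0 \<le> M"
    unfolding M_def by (rule Max_ge) (use n in auto)
  then have M: "0 \<le> M"
    using a[OF n] by linarith
  have nonneg: "0 \<le> circ_pow_mv n a (n + 1) z r"
    by (rule circ_pow_mv_nonneg[OF n a z r])
  show ?thesis
  proof (cases "M' = 0")
    case True
    then show ?thesis
      using le M nonneg unfolding circ_attr_ineq_def M_def M'_def by simp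
  next
    case False
    then have M': "0 < M'"
      using le M unfolding M_def M'_def by simp
    have "M ^ (n + 1) * (M' ^ (n + 1) * z r) \<le> M ^ (n + 1) * circ_pow_mv n a' (n + 1) z r"
      using ineq M unfolding circ_attr_ineq_def M'_def[symmetric] by (intro mult_left_mono) auto
    then have "M' ^ (n + 1) * (M ^ (n + 1) * z r) \<le> M ^ (n + 1) * circ_pow_mv n a' (n + 1) z r"
      by (metis mult.left_commute)
    also have "\<dots> \<le> M' ^ (n + 1) * circ_pow_mv n a (n + 1) z r"
      by (rule circ_pow_mv_compare[where a = a and a' = a' and y = z, OF n a a' M _ _ z])
        (use M' dom in \<open>auto simp: M_def M'_def\<close>)
    finally show ?thesis
      using M' unfolding circ_attr_ineq_def M_def by simp
  qed
qed

lemma in_ivl_bounds: "in_ivl I v \<Longrightarrow> lo I \<le> v \<and> v \<le> hi I"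
  unfolding in_ivl_def lo_def hi_def by (cases I) (auto split: if_splits)

lemma in_ivl_nonneg: "valid_ivl I \<Longrightarrow> in_ivl I v \<Longrightarrow> 0 \<le> v"
  using in_ivl_bounds[of I v] unfolding valid_ivl_def by linarith

lemma x_corner_nonneg: "valid_ivl (I t) \<Longrightarrow> 0 \<le> x_corner I j t"
  unfolding x_corner_def valid_ivl_def by auto

lemma A_corner_eq_circ: "A_corner n aI i = circ n (x_corner aI i)"
  unfolding A_corner_def x_corner_def ..

lemma in_ivl_towards_endpoint:
  assumes w: "in_ivl I w" and v: "v = lo I \<or> v = hi I" and c: "0 < c" "c \<le> 1"
  shows "in_ivl I (v + c * (w - v))"
proof -
  obtain l u cl cu where I: "I = (l, u, cl, cu)"
    by (cases I)
  have "l \<le> w" "w \<le> u"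
    using in_ivl_bounds[OF w] unfolding I lo_def hi_def by simp_all
  moreover have "c * (w - l) \<le> w - l" "c * (u - w) \<le> u - w"
    using c \<open>l \<le> w\<close> \<open>w \<le> u\<close> by (simp_all add: mult_left_le_one_le)
  moreover have "w - l > 0 \<Longrightarrow> c * (w - l) > 0" "u - w > 0 \<Longrightarrow> c * (u - w) > 0"
    using c by simp_all
  moreover have "c * l \<le> c * w" "c * w \<le> c * u"
    using c \<open>l \<le> w\<close> \<open>w \<le> u\<close> by (simp_all add: mult_left_mono)
  ultimately show ?thesis
    using w v unfolding I in_ivl_def lo_def hi_def by (auto split: if_splits simp: algebra_simps)
qed

definition x_corner_approx :: "(nat \<Rightarrow> ivl) \<Rightarrow> nat \<Rightarrow> nat \<Rightarrow> nat \<Rightarrow> real" where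
  "x_corner_approx I j k t =
     x_corner I j t + inverse (real (Suc k)) * ((SOME v. in_ivl (I t) v) - x_corner I j t)"

lemma in_ivl_x_corner_approx:
  assumes "valid_ivl (I t)"
  shows "in_ivl (I t) (x_corner_approx I j k t)"
proof -
  have "in_ivl (I t) (SOME v. in_ivl (I t) v)"
    using assms someI_ex unfolding valid_ivl_def by metis
  then show ?thesis
    unfolding x_corner_approx_def using in_ivl_towards_endpoint
    by (simp add: x_corner_def inverse_le_1_iff)
qed

lemma x_corner_approx_tendsto: "((\<lambda>k. x_corner_approx I j k t) \<longlongrightarrow> x_corner I j t) sequentially"
  using tendsto_add[OF tendsto_const tendsto_mult_right_zero[OF LIMSEQ_inverse_real_of_nat],
      of "x_corner I j t" "(SOME v. in_ivl (I t) v) - x_corner I j t"]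
  unfolding x_corner_approx_def by (simp add: mult.commute)

lemma attr_corner_of_robust:
  assumes n: "0 < n" and X: "\<And>m. m < n \<Longrightarrow> valid_ivl (X m)" and aI: "\<And>t. t < n \<Longrightarrow> valid_ivl (aI t)"
    and robust: "\<And>a x. (\<forall>t<n. in_ivl (aI t) (a t)) \<Longrightarrow> (\<forall>m<n. in_ivl (X m) (x m)) \<Longrightarrow> attr n (circ n a) x"
  shows "attr n (A_corner n aI i) (x_corner X j)"
proof -
  define A Y where "A = x_corner_approx aI i" and "Y = x_corner_approx X j"
  have A_in: "in_ivl (aI t) (A k t)" and Y_in: "in_ivl (X t) (Y k t)" if "t < n" for k t
    unfolding A_def Y_def using in_ivl_x_corner_approx aI X that by simp_all
  have A_lim: "((\<lambda>k. A k t) \<longlongrightarrow> x_corner aI i t) sequentially"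
    and Y_lim: "((\<lambda>k. Y k t) \<longlongrightarrow> x_corner X j t) sequentially" for t
    unfolding A_def Y_def by (rule x_corner_approx_tendsto)+
  have ineq: "circ_attr_ineq n (A k) (Y k) r" if r: "r < n" for k r
  proof -
    have "attr n (circ n (A k)) (Y k)"
      by (rule robust) (simp_all add: A_in Y_in)
    moreover have "0 \<le> A k t" "0 \<le> Y k t" if "t < n" for t
      using in_ivl_nonneg[OF aI A_in] in_ivl_nonneg[OF X Y_in] that by simp_all
    ultimately show ?thesis
      using attr_circ_iff[where a = "A k" and y = "Y k", OF n] r by simp
  qed
  have "circ_attr_ineq n (x_corner aI i) (x_corner X j) r" if "r < n" for r
    by (rule circ_attr_ineq_limit[OF n A_lim Y_lim ineq[OF that] that])
  then show ?thesis
    unfolding A_corner_eq_circ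
    using attr_circ_iff[where a = "x_corner aI i" and y = "x_corner X j", OF n]
      x_corner_nonneg[OF aI] x_corner_nonneg[OF X] by simp
qed

lemma attr_of_attr_corners:
  assumes n: "0 < n" and X: "\<And>m. m < n \<Longrightarrow> valid_ivl (X m)" and aI: "\<And>t. t < n \<Longrightarrow> valid_ivl (aI t)"
    and corners: "\<And>i j. i < n \<Longrightarrow> j < n \<Longrightarrow> attr n (A_corner n aI i) (x_corner X j)"
    and a_in: "\<And>t. t < n \<Longrightarrow> in_ivl (aI t) (a t)" and x_in: "\<And>m. m < n \<Longrightarrow> in_ivl (X m) (x m)"
  shows "attr n (circ n a) x"
proof -
  have a: "0 \<le> a t" if "t < n" for t
    by (rule in_ivl_nonneg[OF aI[OF that] a_in[OF that]])
  have x: "0 \<le> x m" if "m < n" for m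
    by (rule in_ivl_nonneg[OF X[OF that] x_in[OF that]])
  obtain s where s: "s < n" "a s = Max (a ` {..<n})"
    using ex_argmax_lessThan[OF n] .
  define a' where "a' = x_corner aI s"
  have a': "0 \<le> a' t" if "t < n" for t
    unfolding a'_def using x_corner_nonneg[OF aI] that .
  have hi_le: "hi (aI s) \<le> Max (a' ` {..<n})"
    using s(1) unfolding a'_def x_corner_def by (auto intro: Max_ge)
  have max_le: "Max (a ` {..<n}) \<le> Max (a' ` {..<n})"
    using hi_le in_ivl_bounds[OF a_in[OF s(1)]] s(2) by simp
  have max_nonneg: "0 \<le> Max (a ` {..<n})"
    using a[OF s(1)] s(2) by simp
  have dom: "Max (a ` {..<n}) * a' k \<le> Max (a' ` {..<n}) * a k" if k: "k < n" for k
  proof (cases "k = s")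
    case True
    then have "a' k = hi (aI s)"
      unfolding a'_def x_corner_def by simp
    then show ?thesis
      using mult_left_mono[OF hi_le max_nonneg] s(2) True by (simp add: mult.commute)
  next
    case False
    then have "a' k = lo (aI k)"
      unfolding a'_def x_corner_def by simp
    moreover have "0 \<le> lo (aI k)"
      using aI[OF k] unfolding valid_ivl_def by simp
    ultimately show ?thesis
      using mult_mono[OF max_le conjunct1[OF in_ivl_bounds[OF a_in[OF k]]]] max_le max_nonneg by simp
  qed
  have "circ_attr_ineq n a x r" if r: "r < n" for r
  proof -
    define z where "z = x_corner X r"
    have z: "0 \<le> z j" if "j < n" for j
      unfolding z_def using x_corner_nonneg[OF X] that .
    have "circ_attr_ineq n a' z r"
      using corners[OF s(1) r] attr_circ_iff[where a = a' and y = z, OF n a' z] r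
      unfolding a'_def z_def A_corner_eq_circ by simp
    then have ineq: "circ_attr_ineq n a z r"
      using circ_attr_ineq_dominated[where a = a and a' = a' and z = z, OF n a a' z max_le dom r]
      by simp
    have x_r: "lo (X r) \<le> x r" "x r \<le> hi (X r)"
      using in_ivl_bounds[OF x_in[OF r]] by simp_all
    \<comment> \<open>If \<open>hi (X r) = 0\<close> then \<open>x r = 0\<close> and the division by zero yields \<open>c = 0\<close>.\<close>
    define c where "c = x r / hi (X r)"
    have c: "0 \<le> c" "c \<le> 1"
      unfolding c_def using x[OF r] x_r by (auto simp: divide_le_eq_1)
    have eq: "x r = c * z r"
      unfolding c_def z_def x_corner_def using x[OF r] x_r by auto
    have below: "c * z j \<le> x j" if j: "j < n" for j
    proof (cases "j = r")
      case False
      have "c * lo (X j) \<le> lo (X j)"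
        using X[OF j] c unfolding valid_ivl_def by (simp add: mult_left_le_one_le)
      then show ?thesis
        using False in_ivl_bounds[OF x_in[OF j]] unfolding z_def x_corner_def by simp
    qed (use eq in simp)
    show ?thesis
      by (rule circ_attr_ineq_rescale[OF n a z c(1) below eq r ineq])
  qed
  then show ?thesis
    using attr_circ_iff[where a = a and y = x, OF n a x] by simp
qed

theorem theorem4:
  fixes n :: nat and X aI :: "nat \<Rightarrow> ivl"
  assumes "1 \<le> n"
    and "\<forall>i<n. valid_ivl (X i)"
    and "\<forall>t<n. valid_ivl (aI t)"
  shows "(\<forall>a. (\<forall>t<n. in_ivl (aI t) (a t)) \<longrightarrow>
            (\<forall>x. (\<forall>i<n. in_ivl (X i) (x i)) \<longrightarrow> attr n (circ n a) x))
     \<longleftrightarrow> (\<forall>i<n. \<forall>j<n. attr n (A_corner n aI i) (x_corner X j))"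
proof -
  have n: "0 < n"
    using assms(1) by simp
  have X: "\<And>m. m < n \<Longrightarrow> valid_ivl (X m)" and aI: "\<And>t. t < n \<Longrightarrow> valid_ivl (aI t)"
    using assms(2,3) by simp_all
  show ?thesis (is "?robust \<longleftrightarrow> ?corners")
  proof
    assume ?robust
    then show ?corners
      by (intro allI impI attr_corner_of_robust[OF n X aI]) auto
  next
    assume ?corners
    then show ?robust
      by (intro allI impI attr_of_attr_corners[OF n X aI]) auto
  qed
qed

end
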